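(* Let $L_g$ be a Gaussian Lévy basis on $\mathbb{R}^2$ with $L_g(B)\sim\mathcal{N}(\mu\,\mathrm{Leb}(B),\sigma^2\mathrm{Leb}(B))$, let $\phi:(-\infty,0]\to[0,\infty)$ be continuous and increasing with $\int_{-\infty}^0\phi<\infty$, $A=\{(s,x):s<0,\ 0<x<\phi(s)\}$, $A_t=A+(t,0)$, and $X_t=L_g(A_t)$. Then $X$ has a modification whose paths are locally Hölder continuous with every exponent $\alpha\in(0,1/2)$.
   Context: A Gaussian Lévy basis is a family $\{L_g(B): B\}$ indexed by Borel sets of finite Lebesgue measure such that values on disjoint sets are independent, $L_g$ is countably additive a.s., and $L_g(B)\sim\mathcal{N}(\mu\,\mathrm{Leb}(B),\sigma^2\mathrm{Leb}(B))$. *)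

theory Defs
  imports "HOL-Probability.Probability"
begin

definition gauss_measure :: "real \<Rightarrow> real \<Rightarrow> real measure" where
  "gauss_measure m v =
     (if v > 0 then density lborel (normal_density m (sqrt v)) else return borel m)"

definition gaussian_levy_basis ::
  "'w measure \<Rightarrow> ((real \<times> real) set \<Rightarrow> 'w \<Rightarrow> real) \<Rightarrow> real \<Rightarrow> real \<Rightarrow> bool" where
  "gaussian_levy_basis M L \<mu> \<sigma> \<longleftrightarrow>
     prob_space M \<and>
     (\<forall>B\<in>sets lborel. emeasure lborel B < \<infinity> \<longrightarrow>
        L B \<in> borel_measurable M \<and>
        distr M borel (L B) = gauss_measure (\<mu> * measure lborel B) (\<sigma>\<^sup>2 * measure lborel B)) \<and>
     (\<forall>(I :: nat set) B. finite I \<longrightarrow>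
        (\<forall>i\<in>I. B i \<in> sets lborel \<and> emeasure lborel (B i) < \<infinity>) \<longrightarrow>
        disjoint_family_on B I \<longrightarrow>
        prob_space.indep_vars M (\<lambda>_. borel) (\<lambda>i. L (B i)) I) \<and>
     (\<forall>B :: nat \<Rightarrow> (real \<times> real) set.
        (\<forall>i. B i \<in> sets lborel) \<longrightarrow> disjoint_family B \<longrightarrow>
        emeasure lborel (\<Union>i. B i) < \<infinity> \<longrightarrow>
        (AE \<omega> in M. (\<lambda>n. L (B n) \<omega>) sums L (\<Union>i. B i) \<omega>))"

definition locally_hoelder :: "real \<Rightarrow> (real \<Rightarrow> real) \<Rightarrow> bool" where
  "locally_hoelder \<alpha> f \<longleftrightarrow>
     (\<forall>a b. \<exists>C. \<forall>s\<in>{a..b}. \<forall>t\<in>{a..b}. \<bar>f s - f t\<bar> \<le> C * \<bar>s - t\<bar> powr \<alpha>)"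

end

theory Submission
  imports Defs
begin

text \<open>Almost surely \<open>X t - X s = L (A t - A s) - L (A s - A t)\<close>. All ambit sets have the same
  finite area and \<open>\<phi>\<close> is increasing, so both differences have area at most \<open>\<phi> 0 |t - s|\<close>, and the
  Gaussian law of \<open>L\<close> gives \<open>E (X t - X s)^(2k) \<le> K k |t - s|^k\<close> for every \<open>k\<close>. Hence the expected
  value of \<open>\<Sum>n. 2^((k-2) n) \<Sum>j. (X ((j+1)/2^n) - X (j/2^n))^(2k)\<close> over a bounded window is finite,
  so almost surely the level-\<open>n\<close> dyadic increments are \<open>O(2^(-n (1/2 - 1/k)))\<close>. Chaining along the
  dyadic approximations from below then yields a limit path that is locally Hoelder of every exponent
  below \<open>1/2 - 1/k\<close>, and this limit equals \<open>X t\<close> almost surely because the dyadic approximations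
  converge to \<open>X t\<close> fast in \<open>L\<^sup>2\<close>.\<close>

section \<open>Dyadic chaining\<close>

definition dyadic_floor :: "nat \<Rightarrow> real \<Rightarrow> real" where
  "dyadic_floor n t = of_int \<lfloor>t * 2^n\<rfloor> / 2^n"

definition dyadic_limit :: "(real \<Rightarrow> real) \<Rightarrow> real \<Rightarrow> real" where
  "dyadic_limit f t = lim (\<lambda>n. f (dyadic_floor n t))"

lemma floor_double_cases: "\<lfloor>2 * y\<rfloor> = 2 * \<lfloor>y\<rfloor> \<or> \<lfloor>2 * y\<rfloor> = 2 * \<lfloor>y\<rfloor> + 1" for y :: real
proof -
  have "2 * \<lfloor>y\<rfloor> \<le> \<lfloor>2 * y\<rfloor>" by (simp add: le_floor_iff)
  moreover have "\<lfloor>2 * y\<rfloor> < 2 * \<lfloor>y\<rfloor> + 2" by (simp add: floor_less_iff) linarith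
  ultimately show ?thesis by linarith
qed

lemma abs_floor_diff_le_one: "\<bar>a - b\<bar> \<le> 1 \<Longrightarrow> \<bar>\<lfloor>a\<rfloor> - \<lfloor>b\<rfloor>\<bar> \<le> 1" for a b :: real
proof -
  assume "\<bar>a - b\<bar> \<le> 1"
  then have "real_of_int (\<lfloor>a\<rfloor> - \<lfloor>b\<rfloor>) < 2" "real_of_int (\<lfloor>a\<rfloor> - \<lfloor>b\<rfloor>) > -2"
    by linarith+
  then show ?thesis by linarith
qed

lemma dyadic_floor_le: "dyadic_floor n t \<le> t"
  unfolding dyadic_floor_def by (simp add: divide_le_eq)

lemma dyadic_floor_gt: "t - 1 / 2^n < dyadic_floor n t"
proof -
  have "t * 2^n - 1 < of_int \<lfloor>t * 2^n\<rfloor>" by linarith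
  then have "(t * 2^n - 1) / 2^n < of_int \<lfloor>t * 2^n\<rfloor> / 2^n"
    by (intro divide_strict_right_mono) auto
  then show ?thesis unfolding dyadic_floor_def by (simp add: field_simps)
qed

lemma dyadic_floor_ge: "- real N \<le> t \<Longrightarrow> - real N \<le> dyadic_floor n t"
proof -
  assume "- real N \<le> t"
  then have "of_int (- (int N * 2^n)) \<le> t * 2^n" using mult_right_mono[of "- real N" t "2^n"] by simp
  then have "real_of_int (- (int N * 2^n)) \<le> of_int \<lfloor>t * 2^n\<rfloor>" by (simp only: le_floor_iff of_int_le_iff)
  then show ?thesis unfolding dyadic_floor_def by (simp add: field_simps)
qed

lemma exists_dyadic_scale:
  fixes h :: real assumes "0 < h" "h \<le> 1"
  obtains n where "(1/2)^(Suc n) < h" "h \<le> (1/2)^n"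
proof -
  have ex: "\<exists>m. (1/2::real)^m < h" using real_arch_pow_inv[OF assms(1), of "1/2"] by auto
  define m where "m = (LEAST m. (1/2::real)^m < h)"
  have m: "(1/2::real)^m < h" unfolding m_def by (rule LeastI_ex[OF ex])
  then obtain n where mn: "m = Suc n" using assms by (cases m) auto
  then have "\<not> (1/2::real)^n < h" using not_less_Least[of n "\<lambda>m. (1/2::real)^m < h"] unfolding m_def by auto
  then show ?thesis using that m mn by auto
qed

lemma geometric_rate_le_powr:
  fixes \<alpha> \<gamma> h :: real
  assumes "0 < \<alpha>" "\<alpha> \<le> \<gamma>" and "(1/2)^(Suc n) < h" "h \<le> 1"
  shows "(2 powr (-\<gamma>))^n \<le> 2 powr \<gamma> * h powr \<alpha>"
proof -
  have "0 < h" using assms(3) zero_less_power[of "1/2::real" "Suc n"] by linarith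
  have "(2 powr (-\<gamma>))^n = 2 powr \<gamma> * (2 powr (- real (Suc n))) powr \<gamma>"
    by (simp add: powr_realpow[symmetric] powr_powr powr_add[symmetric] algebra_simps)
  also have "2 powr (- real (Suc n)) = (1/2)^(Suc n)"
    by (simp only: powr_minus_divide powr_realpow[OF zero_less_numeral] power_one_over)
  also have "2 powr \<gamma> * ((1/2)^(Suc n)) powr \<gamma> \<le> 2 powr \<gamma> * h powr \<gamma>"
    using assms by (intro mult_left_mono powr_mono2) auto
  also have "\<dots> \<le> 2 powr \<gamma> * h powr \<alpha>"
    using assms \<open>0 < h\<close> by (intro mult_left_mono powr_mono') auto
  finally show ?thesis .
qed

locale dyadic_increment_bound =
  fixes f :: "real \<Rightarrow> real" and q B :: real and N :: nat
  assumes q: "0 < q" "q < 1" and B: "0 \<le> B"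
    and increment_le: "\<And>n (j::int). - real N \<le> of_int j / 2^n \<Longrightarrow> (of_int j + 1) / 2^n \<le> real N \<Longrightarrow>
                 \<bar>f ((of_int j + 1) / 2^n) - f (of_int j / 2^n)\<bar> \<le> B * q^n"
begin

definition tail :: real where "tail = q / (1 - q)"

lemma tail_nonneg: "0 \<le> tail"
  using q by (simp add: tail_def)

lemma step_le:
  assumes t: "- real N \<le> t" "t \<le> real N"
  shows "\<bar>f (dyadic_floor (Suc n) t) - f (dyadic_floor n t)\<bar> \<le> B * q^(Suc n)"
proof -
  define j where "j = \<lfloor>t * 2^n\<rfloor>"
  have dn: "dyadic_floor n t = of_int (2*j) / 2^Suc n" unfolding dyadic_floor_def j_def by simp
  have lo: "- real N \<le> of_int (2*j) / 2^Suc n"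
    using dyadic_floor_ge[OF t(1), of n] dn by simp
  consider "\<lfloor>t * 2^Suc n\<rfloor> = 2 * j" | "\<lfloor>t * 2^Suc n\<rfloor> = 2 * j + 1"
    using floor_double_cases[of "t * 2^n"] unfolding j_def by (auto simp: mult_ac)
  then show ?thesis
  proof cases
    case 1
    then have "dyadic_floor (Suc n) t = dyadic_floor n t" using dn unfolding dyadic_floor_def by simp
    then show ?thesis using q B by simp
  next
    case 2
    then have up: "dyadic_floor (Suc n) t = (of_int (2*j) + 1) / 2^Suc n"
      unfolding dyadic_floor_def by simp
    then have "(of_int (2*j) + 1) / 2^Suc n \<le> real N" using dyadic_floor_le[of "Suc n" t] t by simp
    from increment_le[OF lo this] show ?thesis unfolding up dn .
  qed
qed

lemma chain_le:
  assumes t: "- real N \<le> t" "t \<le> real N" and "n \<le> m"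
  shows "\<bar>f (dyadic_floor m t) - f (dyadic_floor n t)\<bar> \<le> B * q^n * tail"
proof -
  have partial: "\<bar>f (dyadic_floor (n + i) t) - f (dyadic_floor n t)\<bar> \<le> B * q^n * (q * (1 - q^i) / (1 - q))" for i
  proof (induction i)
    case (Suc i)
    have "\<bar>f (dyadic_floor (n + Suc i) t) - f (dyadic_floor n t)\<bar>
        \<le> \<bar>f (dyadic_floor (Suc (n + i)) t) - f (dyadic_floor (n + i) t)\<bar> + \<bar>f (dyadic_floor (n + i) t) - f (dyadic_floor n t)\<bar>"
      by simp
    also have "\<dots> \<le> B * q^(Suc (n + i)) + B * q^n * (q * (1 - q^i) / (1 - q))"
      using step_le[OF t, of "n + i"] Suc by linarith
    also have "\<dots> = B * q^n * (q * (1 - q^Suc i) / (1 - q))"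
      using q by (simp add: field_simps power_add)
    finally show ?case .
  qed simp
  obtain i where m: "m = n + i" using \<open>n \<le> m\<close> le_Suc_ex by blast
  have "q * (1 - q^i) / (1 - q) \<le> tail"
    unfolding tail_def using q by (intro divide_right_mono) (auto simp: mult_left_le)
  then have "B * q^n * (q * (1 - q^i) / (1 - q)) \<le> B * q^n * tail"
    using q B by (intro mult_left_mono) auto
  then show ?thesis using partial[of i] m by simp
qed

lemma adjacent_le:
  assumes t: "- real N \<le> t" "t \<le> real N" and s: "- real N \<le> s" "s \<le> real N"
    and adj: "\<bar>\<lfloor>t * 2^n\<rfloor> - \<lfloor>s * 2^n\<rfloor>\<bar> \<le> 1"
  shows "\<bar>f (dyadic_floor n t) - f (dyadic_floor n s)\<bar> \<le> B * q^n"
proof -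
  have neighbours: "\<bar>f (dyadic_floor n t) - f (dyadic_floor n s)\<bar> \<le> B * q^n"
    if "- real N \<le> s" "t \<le> real N" and e: "\<lfloor>t * 2^n\<rfloor> = \<lfloor>s * 2^n\<rfloor> + 1" for s t
  proof -
    define j where "j = \<lfloor>s * 2^n\<rfloor>"
    have ds: "dyadic_floor n s = of_int j / 2^n" unfolding dyadic_floor_def j_def by simp
    have dt: "dyadic_floor n t = (of_int j + 1) / 2^n" unfolding dyadic_floor_def e j_def by simp
    have "- real N \<le> of_int j / 2^n" using dyadic_floor_ge[OF that(1), of n] ds by simp
    moreover have "(of_int j + 1) / 2^n \<le> real N" using dyadic_floor_le[of n t] that dt by simp
    ultimately show ?thesis using increment_le unfolding ds dt by blast
  qed
  consider "\<lfloor>t * 2^n\<rfloor> = \<lfloor>s * 2^n\<rfloor>" | "\<lfloor>t * 2^n\<rfloor> = \<lfloor>s * 2^n\<rfloor> + 1" | "\<lfloor>s * 2^n\<rfloor> = \<lfloor>t * 2^n\<rfloor> + 1"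
    using adj by linarith
  then show ?thesis
  proof cases
    case 1
    then have "dyadic_floor n t = dyadic_floor n s" unfolding dyadic_floor_def by simp
    then show ?thesis using q B by simp
  qed (use neighbours[of s t] neighbours[of t s] t s in \<open>auto simp: abs_minus_commute\<close>)
qed

abbreviation g :: "real \<Rightarrow> real" where "g \<equiv> dyadic_limit f"

lemma tendsto_dyadic_limit:
  assumes t: "- real N \<le> t" "t \<le> real N"
  shows "(\<lambda>m. f (dyadic_floor m t)) \<longlonglongrightarrow> g t"
proof -
  have "Cauchy (\<lambda>m. f (dyadic_floor m t))"
  proof (rule metric_CauchyI)
    fix e :: real assume "0 < e"
    have "(\<lambda>n. 2 * B * tail * q^n) \<longlonglongrightarrow> 2 * B * tail * 0"
      using q by (intro tendsto_intros) auto
    then have "eventually (\<lambda>n. 2 * B * tail * q^n < e) sequentially"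
      using \<open>0 < e\<close> by (auto simp: order_tendsto_iff)
    then obtain n0 where n0: "2 * B * tail * q^n0 < e" by (auto simp: eventually_sequentially)
    show "\<exists>M. \<forall>m\<ge>M. \<forall>n\<ge>M. dist (f (dyadic_floor m t)) (f (dyadic_floor n t)) < e"
    proof (intro exI allI impI)
      fix m n assume "n0 \<le> m" "n0 \<le> n"
      then have "\<bar>f (dyadic_floor m t) - f (dyadic_floor n0 t)\<bar> \<le> B * q^n0 * tail"
        "\<bar>f (dyadic_floor n t) - f (dyadic_floor n0 t)\<bar> \<le> B * q^n0 * tail"
        using chain_le[OF t] by auto
      then show "dist (f (dyadic_floor m t)) (f (dyadic_floor n t)) < e"
        using n0 unfolding dist_real_def by (simp add: algebra_simps)
    qed
  qed
  then show ?thesis unfolding dyadic_limit_def by (simp add: Cauchy_convergent_iff convergent_LIMSEQ_iff)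
qed

lemma dyadic_limit_close:
  assumes t: "- real N \<le> t" "t \<le> real N" and s: "- real N \<le> s" "s \<le> real N"
    and close: "\<bar>s - t\<bar> \<le> (1/2)^n"
  shows "\<bar>g t - g s\<bar> \<le> B * (2 * tail + 1) * q^n"
proof -
  have "\<bar>t * 2^n - s * 2^n\<bar> = \<bar>s - t\<bar> * 2^n" by (simp add: abs_mult left_diff_distrib[symmetric] abs_minus_commute)
  also have "\<dots> \<le> (1/2)^n * 2^n" using close by (intro mult_right_mono) auto
  finally have adj: "\<bar>\<lfloor>t * 2^n\<rfloor> - \<lfloor>s * 2^n\<rfloor>\<bar> \<le> 1"
    by (intro abs_floor_diff_le_one) (simp add: power_one_over)
  have lim: "(\<lambda>m. \<bar>f (dyadic_floor m t) - f (dyadic_floor m s)\<bar>) \<longlonglongrightarrow> \<bar>g t - g s\<bar>"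
    using tendsto_dyadic_limit[OF t] tendsto_dyadic_limit[OF s] by (intro tendsto_intros)
  show ?thesis
  proof (rule LIMSEQ_le_const2[OF lim], intro exI allI impI)
    fix m assume "n \<le> m"
    then show "\<bar>f (dyadic_floor m t) - f (dyadic_floor m s)\<bar> \<le> B * (2 * tail + 1) * q^n"
      using chain_le[OF t \<open>n \<le> m\<close>] chain_le[OF s \<open>n \<le> m\<close>] adjacent_le[OF t s adj]
      by (simp add: algebra_simps)
  qed
qed

lemma dyadic_limit_bounded: "\<exists>C\<ge>0. \<forall>t. - real N \<le> t \<longrightarrow> t \<le> real N \<longrightarrow> \<bar>g t\<bar> \<le> C"
proof -
  define F where "F = Max ((\<lambda>j. \<bar>f (of_int j)\<bar>) ` {- int N..int N})"
  have F: "\<bar>f (of_int j)\<bar> \<le> F" if "j \<in> {- int N..int N}" for j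
    unfolding F_def using that by (intro Max_ge) auto
  have "\<bar>g t\<bar> \<le> B * tail + F" if t: "- real N \<le> t" "t \<le> real N" for t
  proof -
    have lim: "(\<lambda>m. \<bar>f (dyadic_floor m t) - f (dyadic_floor 0 t)\<bar>) \<longlonglongrightarrow> \<bar>g t - f (dyadic_floor 0 t)\<bar>"
      using tendsto_dyadic_limit[OF t] by (intro tendsto_intros)
    have "\<bar>g t - f (dyadic_floor 0 t)\<bar> \<le> B * tail"
      using chain_le[OF t, of 0] by (intro LIMSEQ_le_const2[OF lim]) auto
    moreover have "\<bar>f (dyadic_floor 0 t)\<bar> \<le> F"
      using t F[of "\<lfloor>t\<rfloor>"] by (simp add: dyadic_floor_def le_floor_iff floor_le_iff)
    ultimately show ?thesis by linarith
  qed
  moreover have "0 \<le> B * tail + F" using F[of 0] B tail_nonneg by fastforce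
  ultimately show ?thesis by blast
qed

lemma dyadic_limit_hoelder:
  assumes "q = 2 powr (-\<gamma>)" and "0 < \<alpha>" "\<alpha> \<le> \<gamma>"
  shows "\<exists>C. \<forall>s t. - real N \<le> s \<longrightarrow> s \<le> real N \<longrightarrow> - real N \<le> t \<longrightarrow> t \<le> real N \<longrightarrow>
           \<bar>g s - g t\<bar> \<le> C * \<bar>s - t\<bar> powr \<alpha>"
proof -
  obtain C0 where C0: "0 \<le> C0" "\<And>t. - real N \<le> t \<Longrightarrow> t \<le> real N \<Longrightarrow> \<bar>g t\<bar> \<le> C0"
    using dyadic_limit_bounded by blast
  define C1 where "C1 = B * (2 * tail + 1) * 2 powr \<gamma>"
  have "0 \<le> C1" unfolding C1_def using B tail_nonneg by auto
  show ?thesis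
  proof (intro exI[of _ "C1 + 2 * C0"] allI impI)
    fix s t assume s: "- real N \<le> s" "s \<le> real N" and t: "- real N \<le> t" "t \<le> real N"
    define h where "h = \<bar>s - t\<bar>"
    have "\<bar>g s - g t\<bar> \<le> C1 * h powr \<alpha>" if h: "0 < h" "h \<le> 1"
    proof -
      obtain n where n: "(1/2)^(Suc n) < h" "h \<le> (1/2)^n" using exists_dyadic_scale[OF h] .
      have "\<bar>g s - g t\<bar> \<le> B * (2 * tail + 1) * q^n"
        using dyadic_limit_close[OF s t] n(2) unfolding h_def by (simp add: abs_minus_commute)
      also have "\<dots> \<le> B * (2 * tail + 1) * (2 powr \<gamma> * h powr \<alpha>)"
        using geometric_rate_le_powr[OF assms(2,3) n(1) h(2)] B tail_nonneg assms(1)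
        by (intro mult_left_mono) auto
      finally show ?thesis unfolding C1_def by (simp add: mult_ac)
    qed
    moreover have "\<bar>g s - g t\<bar> \<le> 2 * C0 * h powr \<alpha>" if "1 < h"
    proof -
      have "\<bar>g s - g t\<bar> \<le> 2 * C0" using C0(2)[OF s] C0(2)[OF t] by linarith
      also have "\<dots> \<le> 2 * C0 * h powr \<alpha>"
        using mult_left_mono[OF ge_one_powr_ge_zero[of h \<alpha>], of "2 * C0"] C0(1) that assms(2) by simp
      finally show ?thesis .
    qed
    ultimately show "\<bar>g s - g t\<bar> \<le> (C1 + 2 * C0) * \<bar>s - t\<bar> powr \<alpha>"
      using \<open>0 \<le> C1\<close> C0(1) unfolding h_def[symmetric]
      by (cases "h = 0"; cases "h \<le> 1") (auto simp: h_def distrib_right intro: order.trans add_increasing add_increasing2)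
  qed
qed

end

section \<open>Even moments of Gaussian laws\<close>

definition std_normal_even_moment :: "nat \<Rightarrow> real" where
  "std_normal_even_moment k = fact (2*k) / (2^k * fact k)"

lemma std_normal_even_moment_nonneg: "0 \<le> std_normal_even_moment k"
  by (simp add: std_normal_even_moment_def)

lemma diff_even_power_le: "(a - b) ^ (2*k) \<le> 2 ^ (2*k) * (a ^ (2*k) + b ^ (2*k))" for a b :: real
proof -
  have "\<bar>a - b\<bar> \<le> 2 * max \<bar>a\<bar> \<bar>b\<bar>" by auto
  then have "\<bar>a - b\<bar> ^ (2*k) \<le> 2 ^ (2*k) * max \<bar>a\<bar> \<bar>b\<bar> ^ (2*k)"
    by (metis abs_ge_zero power_mono power_mult_distrib)
  also have "max \<bar>a\<bar> \<bar>b\<bar> ^ (2*k) \<le> \<bar>a\<bar> ^ (2*k) + \<bar>b\<bar> ^ (2*k)" by (auto simp: max_def)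
  finally show ?thesis by (simp add: power_even_abs)
qed

lemma nn_integral_gauss_measure_even_power_le:
  assumes "0 \<le> v"
  shows "(\<integral>\<^sup>+x. ennreal (x ^ (2*k)) \<partial>gauss_measure m v)
           \<le> ennreal (2^(2*k) * (m^(2*k) + v^k * std_normal_even_moment k))"
proof (cases "v > 0")
  case True
  define s where "s = sqrt v"
  have "0 < s" using True by (simp add: s_def)
  have centred: "has_bochner_integral lborel (\<lambda>x. normal_density m s x * (x - m) ^ (2 * k))
      (v^k * std_normal_even_moment k)"
    using normal_moment_even[where \<mu>=m and \<sigma>=s and k=k] \<open>0 < s\<close> assms
    by (simp add: s_def std_normal_even_moment_def power_divide field_simps)
  have total: "has_bochner_integral lborel (normal_density m s) 1"
    using normal_moment_even[where \<mu>=m and \<sigma>=s and k=0] \<open>0 < s\<close> by simp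
  have "(\<integral>\<^sup>+x. ennreal (x ^ (2*k)) \<partial>gauss_measure m v)
      = (\<integral>\<^sup>+x. ennreal (normal_density m s x * x ^ (2*k)) \<partial>lborel)"
    using True unfolding gauss_measure_def s_def[symmetric]
    by (simp, subst nn_integral_density)
      (auto simp: ennreal_mult normal_density_nonneg zero_le_even_power)
  also have "\<dots> \<le> (\<integral>\<^sup>+x. ennreal (2^(2*k) * (normal_density m s x * (x - m) ^ (2 * k)
                                                    + m^(2*k) * normal_density m s x)) \<partial>lborel)"
  proof (intro nn_integral_mono ennreal_leI)
    fix x
    have "x ^ (2*k) \<le> 2^(2*k) * ((x - m) ^ (2*k) + m ^ (2*k))"
      using diff_even_power_le[of "x - m" "-m" k] by simp
    then have "normal_density m s x * x ^ (2*k)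
        \<le> normal_density m s x * (2^(2*k) * ((x - m) ^ (2*k) + m ^ (2*k)))"
      by (rule mult_left_mono) (simp add: normal_density_nonneg)
    then show "normal_density m s x * x ^ (2*k)
        \<le> 2^(2*k) * (normal_density m s x * (x - m) ^ (2 * k) + m^(2*k) * normal_density m s x)"
      by (simp add: algebra_simps)
  qed
  also have "\<dots> = ennreal (2^(2*k) * (v^k * std_normal_even_moment k + m^(2*k) * 1))"
    using has_bochner_integral_mult_right[OF has_bochner_integral_add[OF centred
        has_bochner_integral_mult_right[OF total]], of "2^(2*k)" "m^(2*k)"]
    by (intro nn_integral_eq_integral[THEN trans])
      (auto simp: has_bochner_integral_iff normal_density_nonneg zero_le_even_power)
  finally show ?thesis by (simp add: add.commute)
next
  case False
  then have "v = 0" using assms by auto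
  have "1 * m^(2*k) \<le> 2^(2*k) * m^(2*k)"
    by (intro mult_right_mono) (auto simp: zero_le_even_power)
  also have "\<dots> \<le> 2^(2*k) * (m^(2*k) + v^k * std_normal_even_moment k)"
    using assms std_normal_even_moment_nonneg by (intro mult_left_mono) auto
  finally have "m^(2*k) \<le> 2^(2*k) * (m^(2*k) + v^k * std_normal_even_moment k)" by simp
  then show ?thesis
    using \<open>v = 0\<close> by (simp add: gauss_measure_def nn_integral_return ennreal_leI del: power_0_left)
qed

section \<open>Gaussian Levy bases\<close>

context
  fixes M :: "'w measure" and L :: "(real \<times> real) set \<Rightarrow> 'w \<Rightarrow> real" and \<mu> \<sigma> :: real
  assumes levy: "gaussian_levy_basis M L \<mu> \<sigma>"
begin

lemma levy_basis_measurable: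
  "B \<in> sets lborel \<Longrightarrow> emeasure lborel B < \<infinity> \<Longrightarrow> L B \<in> borel_measurable M"
  using levy unfolding gaussian_levy_basis_def by blast

lemma levy_basis_distr:
  "B \<in> sets lborel \<Longrightarrow> emeasure lborel B < \<infinity> \<Longrightarrow>
   distr M borel (L B) = gauss_measure (\<mu> * measure lborel B) (\<sigma>\<^sup>2 * measure lborel B)"
  using levy unfolding gaussian_levy_basis_def by blast

lemma AE_levy_basis_sums:
  "(\<And>i. B i \<in> sets lborel) \<Longrightarrow> disjoint_family B \<Longrightarrow> emeasure lborel (\<Union>i. B i) < \<infinity> \<Longrightarrow>
   AE \<omega> in M. (\<lambda>n. L (B n) \<omega>) sums L (\<Union>i. B i) \<omega>"
  using levy unfolding gaussian_levy_basis_def by blast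

lemma AE_levy_basis_empty: "AE \<omega> in M. L {} \<omega> = 0"
proof -
  have "distr M borel (L {}) = return borel 0"
    using levy_basis_distr[of "{}"] by (simp add: gauss_measure_def)
  then have "AE x in distr M borel (L {}). x = 0" by (simp only:) (subst AE_return, auto)
  then show ?thesis using levy_basis_measurable[of "{}"] by (subst (asm) AE_distr_iff) auto
qed

lemma AE_levy_basis_Un:
  assumes "B \<in> sets lborel" "C \<in> sets lborel" "B \<inter> C = {}" "emeasure lborel (B \<union> C) < \<infinity>"
  shows "AE \<omega> in M. L (B \<union> C) \<omega> = L B \<omega> + L C \<omega>"
proof -
  define D where "D n = (if n = 0 then B else if n = 1 then C else {})" for n :: nat
  have U: "(\<Union>i. D i) = B \<union> C"
    unfolding D_def by (auto split: if_splits)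
  have "disjoint_family D" using assms(3)
    unfolding disjoint_family_on_def D_def by auto
  moreover have "\<forall>i. D i \<in> sets lborel" using assms by (simp add: D_def)
  ultimately have "AE \<omega> in M. (\<lambda>n. L (D n) \<omega>) sums L (\<Union>i. D i) \<omega>"
    using assms(4) U by (intro AE_levy_basis_sums) auto
  then show ?thesis using AE_levy_basis_empty
  proof eventually_elim
    case (elim \<omega>)
    have "(\<lambda>n. L (D n) \<omega>) sums (\<Sum>n\<in>{0,1}. L (D n) \<omega>)"
      by (rule sums_finite) (use elim in \<open>auto simp: D_def\<close>)
    then show ?case using elim(1) U by (auto simp: D_def dest: sums_unique2)
  qed
qed

lemma AE_levy_basis_diff:
  assumes "B \<in> sets lborel" "C \<in> sets lborel" "emeasure lborel B < \<infinity>" "emeasure lborel C < \<infinity>"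
  shows "AE \<omega> in M. L B \<omega> - L C \<omega> = L (B - C) \<omega> - L (C - B) \<omega>"
proof -
  have B: "(B - C) \<union> (B \<inter> C) = B" and C: "(C - B) \<union> (B \<inter> C) = C" by auto
  have "AE \<omega> in M. L B \<omega> = L (B - C) \<omega> + L (B \<inter> C) \<omega>"
    using AE_levy_basis_Un[of "B - C" "B \<inter> C"] assms unfolding B by auto
  moreover have "AE \<omega> in M. L C \<omega> = L (C - B) \<omega> + L (B \<inter> C) \<omega>"
    using AE_levy_basis_Un[of "C - B" "B \<inter> C"] assms unfolding C by auto
  ultimately show ?thesis by eventually_elim auto
qed

lemma levy_basis_even_moment_le:
  assumes "B \<in> sets lborel" "emeasure lborel B < \<infinity>" "measure lborel B \<le> v"
  shows "(\<integral>\<^sup>+\<omega>. ennreal (L B \<omega> ^ (2*k)) \<partial>M)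
     \<le> ennreal (2^(2*k) * ((\<mu> * v)^(2*k) + (\<sigma>\<^sup>2 * v)^k * std_normal_even_moment k))"
proof -
  let ?m = "measure lborel B"
  have "(\<integral>\<^sup>+\<omega>. ennreal (L B \<omega> ^ (2*k)) \<partial>M) = (\<integral>\<^sup>+x. ennreal (x ^ (2*k)) \<partial>distr M borel (L B))"
    using levy_basis_measurable[OF assms(1,2)] by (subst nn_integral_distr) auto
  also have "\<dots> \<le> ennreal (2^(2*k) * ((\<mu> * ?m)^(2*k) + (\<sigma>\<^sup>2 * ?m)^k * std_normal_even_moment k))"
    unfolding levy_basis_distr[OF assms(1,2)]
    by (rule nn_integral_gauss_measure_even_power_le) auto
  also have "\<dots> \<le> ennreal (2^(2*k) * ((\<mu> * v)^(2*k) + (\<sigma>\<^sup>2 * v)^k * std_normal_even_moment k))"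
  proof -
    have "\<bar>\<mu> * ?m\<bar> \<le> \<bar>\<mu> * v\<bar>" "\<sigma>\<^sup>2 * ?m \<le> \<sigma>\<^sup>2 * v"
      using assms(3) by (auto simp: abs_mult intro!: mult_left_mono)
    then have "\<bar>\<mu> * ?m\<bar>^(2*k) \<le> \<bar>\<mu> * v\<bar>^(2*k)" "(\<sigma>\<^sup>2 * ?m)^k \<le> (\<sigma>\<^sup>2 * v)^k"
      by (auto intro!: power_mono)
    then have "(\<mu> * ?m)^(2*k) \<le> (\<mu> * v)^(2*k)" "(\<sigma>\<^sup>2 * ?m)^k \<le> (\<sigma>\<^sup>2 * v)^k"
      by (simp_all add: power_even_abs)
    then show ?thesis using std_normal_even_moment_nonneg
      by (intro ennreal_leI mult_left_mono add_mono mult_right_mono) auto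
  qed
  finally show ?thesis .
qed

lemma levy_basis_increment_moment_le:
  assumes "B \<in> sets lborel" "C \<in> sets lborel" "emeasure lborel B < \<infinity>" "emeasure lborel C < \<infinity>"
    and "measure lborel (B - C) \<le> v" "measure lborel (C - B) \<le> v"
  shows "(\<integral>\<^sup>+\<omega>. ennreal ((L B \<omega> - L C \<omega>) ^ (2*k)) \<partial>M)
     \<le> ennreal (2 * 16^k * ((\<mu> * v)^(2*k) + (\<sigma>\<^sup>2 * v)^k * std_normal_even_moment k))"
proof -
  let ?b = "2^(2*k) * ((\<mu> * v)^(2*k) + (\<sigma>\<^sup>2 * v)^k * std_normal_even_moment k)"
  have fin: "emeasure lborel (B - C) < \<infinity>" "emeasure lborel (C - B) < \<infinity>"
    using assms by (meson Diff_subset emeasure_mono le_less_trans)+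
  have [measurable]: "L (B - C) \<in> borel_measurable M" "L (C - B) \<in> borel_measurable M"
    using assms fin by (auto intro: levy_basis_measurable)
  have "(\<integral>\<^sup>+\<omega>. ennreal ((L B \<omega> - L C \<omega>) ^ (2*k)) \<partial>M)
      = (\<integral>\<^sup>+\<omega>. ennreal ((L (B - C) \<omega> - L (C - B) \<omega>) ^ (2*k)) \<partial>M)"
    using AE_levy_basis_diff[OF assms(1-4)] by (intro nn_integral_cong_AE) (auto elim: eventually_mono)
  also have "\<dots> \<le> (\<integral>\<^sup>+\<omega>. ennreal (2^(2*k)) * (ennreal (L (B - C) \<omega> ^ (2*k)) + ennreal (L (C - B) \<omega> ^ (2*k))) \<partial>M)"
  proof (rule nn_integral_mono)
    fix \<omega>
    have "ennreal ((L (B - C) \<omega> - L (C - B) \<omega>) ^ (2*k))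
        \<le> ennreal (2^(2*k) * (L (B - C) \<omega> ^ (2*k) + L (C - B) \<omega> ^ (2*k)))"
      by (intro ennreal_leI diff_even_power_le)
    then show "ennreal ((L (B - C) \<omega> - L (C - B) \<omega>) ^ (2*k))
        \<le> ennreal (2^(2*k)) * (ennreal (L (B - C) \<omega> ^ (2*k)) + ennreal (L (C - B) \<omega> ^ (2*k)))"
      by (simp add: ennreal_mult zero_le_even_power)
  qed
  also have "\<dots> = ennreal (2^(2*k)) * ((\<integral>\<^sup>+\<omega>. ennreal (L (B - C) \<omega> ^ (2*k)) \<partial>M) + (\<integral>\<^sup>+\<omega>. ennreal (L (C - B) \<omega> ^ (2*k)) \<partial>M))"
    by (subst nn_integral_cmult) (auto simp: nn_integral_add)
  also have "\<dots> \<le> ennreal (2^(2*k)) * (ennreal ?b + ennreal ?b)"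
    using assms fin by (intro mult_left_mono add_mono levy_basis_even_moment_le) auto
  also have "\<dots> = ennreal (2^(2*k) * (?b + ?b))"
  proof -
    have "0 \<le> v" using assms(5) measure_nonneg order_trans by blast
    then have "0 \<le> ?b"
      using std_normal_even_moment_nonneg by (auto simp: zero_le_even_power)
    have "ennreal (2^(2*k) * (?b + ?b)) = ennreal (2^(2*k)) * ennreal (?b + ?b)"
      using \<open>0 \<le> ?b\<close> by (intro ennreal_mult) auto
    also have "ennreal (?b + ?b) = ennreal ?b + ennreal ?b"
      using \<open>0 \<le> ?b\<close> by (intro ennreal_plus) auto
    finally show ?thesis by (rule sym)
  qed
  also have "\<dots> = ennreal (2 * 16^k * ((\<mu> * v)^(2*k) + (\<sigma>\<^sup>2 * v)^k * std_normal_even_moment k))"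
  proof -
    have "(2::real)^(2*k) * 2^(2*k) = 16^k" by (simp add: power_mult flip: power_mult_distrib)
    then have "(2::real)^(2*k) * (2^(2*k) * x + 2^(2*k) * x) = 2 * 16^k * x" for x
      by (simp add: algebra_simps)
    then show ?thesis by (simp only:)
  qed
  finally show ?thesis .
qed

end

section \<open>Ambit sets\<close>

lemma emeasure_Diff_swap:
  assumes "A \<in> sets M" "B \<in> sets M" "emeasure M A = emeasure M B" "emeasure M A < \<infinity>"
  shows "emeasure M (A - B) = emeasure M (B - A)"
proof -
  have disj: "A \<inter> B \<inter> (A - B) = {}" "A \<inter> B \<inter> (B - A) = {}" and "A \<inter> B \<union> (B - A) = B" by auto
  have "emeasure M A = emeasure M (A \<inter> B) + emeasure M (A - B)"
    using plus_emeasure[of "A \<inter> B" M "A - B"] assms(1,2) disj by (simp add: Int_Diff_Un)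
  moreover have "emeasure M B = emeasure M (A \<inter> B) + emeasure M (B - A)"
    using plus_emeasure[of "A \<inter> B" M "B - A"] assms(1,2) disj \<open>A \<inter> B \<union> (B - A) = B\<close> by simp
  moreover have "emeasure M (A \<inter> B) < \<infinity>"
    using assms emeasure_mono[of "A \<inter> B" A M] by auto
  ultimately show ?thesis using assms(3)
    by (auto simp: ennreal_add_left_cancel less_top)
qed

definition ambit_set :: "(real \<Rightarrow> real) \<Rightarrow> real \<Rightarrow> (real \<times> real) set" where
  "ambit_set \<phi> t = {(u, x). u < t \<and> 0 < x \<and> x < \<phi> (u - t)}"

lemma translate_ambit_set: "(\<lambda>p. p + (t, 0)) ` ambit_set \<phi> s = ambit_set \<phi> (s + t)"
proof safe
  fix u x assume "(u, x) \<in> ambit_set \<phi> (s + t)"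
  then have "(u - t, x) \<in> ambit_set \<phi> s" by (simp add: ambit_set_def algebra_simps)
  then show "(u, x) \<in> (\<lambda>p. p + (t, 0)) ` ambit_set \<phi> s" by (intro image_eqI[of _ _ "(u - t, x)"]) auto
qed (auto simp: ambit_set_def algebra_simps)

context
  fixes \<phi> :: "real \<Rightarrow> real"
  assumes cont: "continuous_on {..0} \<phi>"
begin

lemma sets_ambit_set: "ambit_set \<phi> t \<in> sets lborel"
proof -
  have [measurable]: "(\<lambda>s. \<phi> (min s 0)) \<in> borel_measurable borel"
    by (intro borel_measurable_continuous_onI continuous_on_compose2[OF cont] continuous_intros) auto
  have [measurable]: "fst \<in> borel_measurable (borel :: (real \<times> real) measure)"
    "snd \<in> borel_measurable (borel :: (real \<times> real) measure)"
    by (intro borel_measurable_continuous_onI continuous_intros)+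
  have "{p :: real \<times> real. fst p < t \<and> 0 < snd p \<and> snd p < \<phi> (min (fst p - t) 0)} \<in> sets borel"
    by measurable
  also have "{p. fst p < t \<and> 0 < snd p \<and> snd p < \<phi> (min (fst p - t) 0)} = ambit_set \<phi> t"
    by (auto simp: ambit_set_def)
  finally show ?thesis by simp
qed

lemma emeasure_ambit_set: "emeasure lborel (ambit_set \<phi> t) = emeasure lborel (ambit_set \<phi> 0)"
proof -
  have "emeasure lborel (ambit_set \<phi> t) = emeasure (distr lborel borel ((+) (t, 0))) (ambit_set \<phi> t)"
    by (simp add: lborel_distr_plus)
  also have "\<dots> = emeasure lborel (((+) (t, 0)) -` ambit_set \<phi> t)"
    using sets_ambit_set by (subst emeasure_distr) auto
  also have "((+) (t, 0)) -` ambit_set \<phi> t = ambit_set \<phi> 0"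
    by (auto simp: ambit_set_def)
  finally show ?thesis .
qed

lemma emeasure_ambit_set_finite:
  assumes nonneg: "\<forall>s\<le>0. 0 \<le> \<phi> s" and integrable: "set_integrable lborel {..0} \<phi>"
  shows "emeasure lborel (ambit_set \<phi> t) < \<infinity>"
proof -
  let ?A = "ambit_set \<phi> 0"
  have "emeasure lborel ?A = emeasure (lborel \<Otimes>\<^sub>M lborel) ?A"
    by (simp add: lborel_prod)
  also have "\<dots> = (\<integral>\<^sup>+s. emeasure lborel (Pair s -` ?A) \<partial>lborel)"
    using sets_ambit_set[of 0] unfolding lborel_prod[symmetric] by (rule lborel.emeasure_pair_measure_alt)
  also have "\<dots> \<le> (\<integral>\<^sup>+s. ennreal (indicator {..0} s * \<phi> s) \<partial>lborel)"
  proof (rule nn_integral_mono)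
    fix s :: real
    show "emeasure lborel (Pair s -` ?A) \<le> ennreal (indicator {..0} s * \<phi> s)"
    proof (cases "s < 0")
      case True
      then have "Pair s -` ?A = {0<..<\<phi> s}" by (auto simp: ambit_set_def)
      then show ?thesis using True nonneg by (simp add: indicator_def)
    next
      case False
      then have "Pair s -` ?A = {}" by (auto simp: ambit_set_def)
      then show ?thesis by simp
    qed
  qed
  also have "\<dots> = ennreal (LINT s:{..0}|lborel. \<phi> s)"
    using integrable nonneg unfolding set_integrable_def set_lebesgue_integral_def
    by (simp only: real_scaleR_def, intro nn_integral_eq_integral) (auto simp: indicator_def)
  finally show ?thesis
    unfolding emeasure_ambit_set[of t] by (auto simp: top_unique less_top[symmetric])
qed

end

lemma ambit_set_Diff_subset:
  assumes "mono_on {..0} \<phi>" "s \<le> t"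
  shows "ambit_set \<phi> t - ambit_set \<phi> s \<subseteq> {s..t} \<times> {0..\<phi> 0}"
proof
  fix p assume "p \<in> ambit_set \<phi> t - ambit_set \<phi> s"
  then obtain u x where p: "p = (u, x)" and in_t: "u < t" "0 < x" "x < \<phi> (u - t)"
    and not_s: "\<not> (u < s \<and> x < \<phi> (u - s))"
    by (cases p) (auto simp: ambit_set_def)
  have "\<phi> (u - t) \<le> \<phi> (u - s)" if "u < s"
    using assms that by (intro mono_onD[OF assms(1)]) auto
  with in_t not_s have "s \<le> u" by fastforce
  moreover have "\<phi> (u - t) \<le> \<phi> 0" using in_t by (intro mono_onD[OF assms(1)]) auto
  ultimately show "p \<in> {s..t} \<times> {0..\<phi> 0}" using p in_t by auto
qed

text \<open>Both differences have the same measure because all ambit sets have the same finite measure,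
  and the one with \<open>s \<le> t\<close> lies in the rectangle \<open>[s, t] \<times> [0, \<phi> 0]\<close>.\<close>
lemma measure_ambit_set_Diff_le:
  assumes cont: "continuous_on {..0} \<phi>" and mono: "mono_on {..0} \<phi>"
    and nonneg: "\<forall>s\<le>0. 0 \<le> \<phi> s" and integrable: "set_integrable lborel {..0} \<phi>"
  shows "measure lborel (ambit_set \<phi> t - ambit_set \<phi> s) \<le> \<phi> 0 * \<bar>t - s\<bar>"
proof -
  have rect: "emeasure lborel (ambit_set \<phi> t - ambit_set \<phi> s) \<le> ennreal (\<phi> 0 * (t - s))"
    if "s \<le> t" for s t
  proof -
    have "emeasure lborel (ambit_set \<phi> t - ambit_set \<phi> s) \<le> emeasure lborel ({s..t} \<times> {0..\<phi> 0})"
      using ambit_set_Diff_subset[OF mono that] by (intro emeasure_mono) (auto intro!: borel_closed closed_Times)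
    also have "\<dots> = ennreal (\<phi> 0 * (t - s))"
      using that nonneg
      by (simp add: lborel_prod[symmetric] lborel.emeasure_pair_measure_Times ennreal_mult' mult.commute)
    finally show ?thesis .
  qed
  have swap: "emeasure lborel (ambit_set \<phi> t - ambit_set \<phi> s) = emeasure lborel (ambit_set \<phi> s - ambit_set \<phi> t)"
    using sets_ambit_set[OF cont] emeasure_ambit_set[OF cont, of t] emeasure_ambit_set[OF cont, of s]
      emeasure_ambit_set_finite[OF cont nonneg integrable]
    by (intro emeasure_Diff_swap) auto
  have "emeasure lborel (ambit_set \<phi> t - ambit_set \<phi> s) \<le> ennreal (\<phi> 0 * \<bar>t - s\<bar>)"
    using rect[of s t] rect[of t s] swap by (cases "s \<le> t") auto
  then show ?thesis using nonneg by (simp add: measure_def enn2real_leI)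
qed

section \<open>The Kolmogorov--Chentsov construction\<close>

lemma locally_hoelderI:
  assumes "\<And>N::nat. \<exists>C. \<forall>s t. - real N \<le> s \<longrightarrow> s \<le> real N \<longrightarrow> - real N \<le> t \<longrightarrow> t \<le> real N \<longrightarrow>
             \<bar>f s - f t\<bar> \<le> C * \<bar>s - t\<bar> powr \<alpha>"
  shows "locally_hoelder \<alpha> f"
  unfolding locally_hoelder_def
proof (intro allI)
  fix a b :: real
  define N where "N = nat \<lceil>max \<bar>a\<bar> \<bar>b\<bar>\<rceil>"
  have "- real N \<le> a" "b \<le> real N" unfolding N_def by linarith+
  then show "\<exists>C. \<forall>s\<in>{a..b}. \<forall>t\<in>{a..b}. \<bar>f s - f t\<bar> \<le> C * \<bar>s - t\<bar> powr \<alpha>"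
    using assms[of N] by (meson atLeastAtMost_iff order_trans)
qed

lemma exists_nat_exponent_below_half:
  fixes \<alpha> :: real assumes "\<alpha> < 1/2"
  obtains k :: nat where "3 \<le> k" "\<alpha> \<le> 1/2 - 1/k"
proof -
  define k where "k = nat \<lceil>1 / (1/2 - \<alpha>)\<rceil> + 3"
  have "1 / (1/2 - \<alpha>) \<le> real k" unfolding k_def by linarith
  then have "1 \<le> real k * (1/2 - \<alpha>)" using assms by (simp add: pos_divide_le_eq)
  then have "1 / real k \<le> 1/2 - \<alpha>" unfolding k_def by (simp add: pos_divide_le_eq mult.commute)
  then show ?thesis using that[of k] unfolding k_def by simp
qed

lemma AE_tendsto_zero_of_summable_second_moments:
  fixes f :: "nat \<Rightarrow> 'a \<Rightarrow> real"
  assumes [measurable]: "\<And>n. f n \<in> borel_measurable M"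
    and finite: "(\<Sum>n. \<integral>\<^sup>+x. ennreal (f n x ^ 2) \<partial>M) \<noteq> \<infinity>"
  shows "AE x in M. (\<lambda>n. f n x) \<longlonglongrightarrow> 0"
proof -
  have "(\<integral>\<^sup>+x. (\<Sum>n. ennreal (f n x ^ 2)) \<partial>M) \<noteq> \<infinity>"
    using finite by (subst nn_integral_suminf) auto
  then have "AE x in M. (\<Sum>n. ennreal (f n x ^ 2)) \<noteq> \<infinity>"
    by (intro nn_integral_PInf_AE) auto
  then show ?thesis
  proof (rule eventually_mono)
    fix x assume "(\<Sum>n. ennreal (f n x ^ 2)) \<noteq> \<infinity>"
    then have "summable (\<lambda>n. f n x ^ 2)"
      by (intro summable_suminf_not_top) auto
    then have "(\<lambda>n. f n x ^ 2) \<longlonglongrightarrow> 0" by (rule summable_LIMSEQ_zero)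
    then have "(\<lambda>n. sqrt (f n x ^ 2)) \<longlonglongrightarrow> sqrt 0" by (rule tendsto_real_sqrt)
    then show "(\<lambda>n. f n x) \<longlonglongrightarrow> 0" by (simp add: tendsto_rabs_zero_iff)
  qed
qed

locale kolmogorov_chentsov =
  fixes M :: "'w measure" and X :: "real \<Rightarrow> 'w \<Rightarrow> real" and K :: "nat \<Rightarrow> real"
  assumes measurable_X [measurable]: "\<And>t. X t \<in> borel_measurable M"
    and K_nonneg: "\<And>k. 0 \<le> K k"
    and moment_le: "\<And>k s t. \<bar>t - s\<bar> \<le> 1 \<Longrightarrow>
         (\<integral>\<^sup>+\<omega>. ennreal ((X t \<omega> - X s \<omega>) ^ (2*k)) \<partial>M) \<le> ennreal (K k * \<bar>t - s\<bar> ^ k)"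
begin

definition dyadic_increment :: "nat \<Rightarrow> int \<Rightarrow> 'w \<Rightarrow> real" where
  "dyadic_increment n j \<omega> = X ((of_int j + 1) / 2^n) \<omega> - X (of_int j / 2^n) \<omega>"

text \<open>The weight \<open>2^((k-2) n)\<close> makes the expectation of the \<open>n\<close>-th term at most \<open>2 N K k 2^-n\<close>,
  while a finite sum forces \<open>|dyadic_increment n j \<omega>| \<le> B 2^(-n (1/2 - 1/k))\<close>.\<close>
definition dyadic_energy :: "nat \<Rightarrow> nat \<Rightarrow> 'w \<Rightarrow> ennreal" where
  "dyadic_energy k N \<omega> =
     (\<Sum>n. ennreal (2^((k-2)*n) * (\<Sum>j\<in>{- (int N * 2^n) ..< int N * 2^n}. dyadic_increment n j \<omega> ^ (2*k))))"

lemma measurable_dyadic_energy[measurable]: "dyadic_energy k N \<in> borel_measurable M"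
  unfolding dyadic_energy_def dyadic_increment_def by measurable

lemma nn_integral_dyadic_level_le:
  assumes "2 \<le> k"
  shows "(\<integral>\<^sup>+\<omega>. ennreal (2^((k-2)*n) * (\<Sum>j\<in>{- (int N * 2^n) ..< int N * 2^n}. dyadic_increment n j \<omega> ^ (2*k))) \<partial>M)
     \<le> ennreal (2 * real N * K k * (1/2)^n)"
proof -
  let ?J = "{- (int N * 2^n) ..< int N * 2^n}"
  have moment: "(\<integral>\<^sup>+\<omega>. ennreal (dyadic_increment n j \<omega> ^ (2*k)) \<partial>M) \<le> ennreal (K k * (1/2^n)^k)" for j
  proof -
    have "\<bar>(of_int j + 1) / 2^n - of_int j / 2^n\<bar> = (1/2^n::real)"
      by (simp add: diff_divide_distrib[symmetric])
    then show ?thesis unfolding dyadic_increment_def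
      using moment_le[of "(of_int j + 1) / 2^n" "of_int j / 2^n" k] by simp
  qed
  have "(\<integral>\<^sup>+\<omega>. ennreal (2^((k-2)*n) * (\<Sum>j\<in>?J. dyadic_increment n j \<omega> ^ (2*k))) \<partial>M)
      = (\<integral>\<^sup>+\<omega>. ennreal (2^((k-2)*n)) * (\<Sum>j\<in>?J. ennreal (dyadic_increment n j \<omega> ^ (2*k))) \<partial>M)"
    by (intro nn_integral_cong) (simp add: ennreal_mult zero_le_even_power sum_nonneg)
  also have "\<dots> = ennreal (2^((k-2)*n)) * (\<Sum>j\<in>?J. (\<integral>\<^sup>+\<omega>. ennreal (dyadic_increment n j \<omega> ^ (2*k)) \<partial>M))"
    unfolding dyadic_increment_def
    by (subst nn_integral_cmult) (auto simp: nn_integral_sum simp del: sum_ennreal)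
  also have "\<dots> \<le> ennreal (2^((k-2)*n)) * (\<Sum>j\<in>?J. ennreal (K k * (1/2^n)^k))"
    using moment by (intro mult_left_mono sum_mono) auto
  also have "\<dots> = ennreal (2^((k-2)*n) * (real (card ?J) * (K k * (1/2^n)^k)))"
    using K_nonneg by (simp add: ennreal_mult ennreal_of_nat_eq_real_of_nat)
  also have "2^((k-2)*n) * (real (card ?J) * (K k * (1/2^n)^k)) = 2 * real N * K k * (1/2)^n"
  proof -
    obtain i where "k = i + 2" using assms le_Suc_ex by (metis add.commute)
    then have "(2::real)^((k-2)*n) * 2^n * (1/2^n)^k = (1/2)^n"
      by (simp add: power_mult[symmetric] field_simps power_add mult.commute)
    then show ?thesis by (simp add: algebra_simps)
  qed
  finally show ?thesis .
qed

lemma nn_integral_dyadic_energy_finite: "2 \<le> k \<Longrightarrow> (\<integral>\<^sup>+\<omega>. dyadic_energy k N \<omega> \<partial>M) \<noteq> \<infinity>"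
proof -
  assume k: "2 \<le> k"
  have "(\<integral>\<^sup>+\<omega>. dyadic_energy k N \<omega> \<partial>M)
      = (\<Sum>n. \<integral>\<^sup>+\<omega>. ennreal (2^((k-2)*n) * (\<Sum>j\<in>{- (int N * 2^n) ..< int N * 2^n}. dyadic_increment n j \<omega> ^ (2*k))) \<partial>M)"
    unfolding dyadic_energy_def dyadic_increment_def by (rule nn_integral_suminf) measurable
  also have "\<dots> \<le> (\<Sum>n. ennreal (2 * real N * K k * (1/2)^n))"
    using nn_integral_dyadic_level_le[OF k] by (intro suminf_le) auto
  also have "\<dots> = ennreal (\<Sum>n. 2 * real N * K k * (1/2)^n)"
    using K_nonneg by (intro suminf_ennreal2) (auto intro!: summable_mult summable_geometric)
  finally show ?thesis by (auto simp: top_unique)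
qed

lemma dyadic_increment_le_of_energy_finite:
  assumes finite: "dyadic_energy k N \<omega> \<noteq> \<infinity>" and "2 \<le> k"
  obtains B where "0 \<le> B"
    "\<And>n j. - real N \<le> of_int j / 2^n \<Longrightarrow> (of_int j + 1) / 2^n \<le> real N \<Longrightarrow>
       \<bar>X ((of_int j + 1) / 2^n) \<omega> - X (of_int j / 2^n) \<omega>\<bar> \<le> B * (2 powr (-(1/2 - 1/k)))^n"
proof -
  define q :: real where "q = 2 powr (-(1/2 - 1/k))"
  define a where "a n = 2^((k-2)*n) * (\<Sum>j\<in>{- (int N * 2^n) ..< int N * 2^n}. dyadic_increment n j \<omega> ^ (2*k))" for n
  have a_nonneg: "0 \<le> a n" for n
    unfolding a_def by (intro mult_nonneg_nonneg sum_nonneg) (auto simp: zero_le_even_power)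
  have "summable a"
    using finite a_nonneg unfolding dyadic_energy_def a_def[symmetric] by (intro summable_suminf_not_top) auto
  then have a_le: "a n \<le> suminf a" for n
    using sum_le_suminf[of a "{n}"] a_nonneg by auto
  define B where "B = root (2*k) (suminf a)"
  have "0 \<le> B" unfolding B_def using a_le[of 0] a_nonneg[of 0] by (simp add: real_root_ge_zero)
  have q_pow: "q^(2*k) * 2^(k-2) = 1"
  proof -
    have "q^(2*k) = 2 powr (real (2*k) * (-(1/2 - 1/k)))"
      unfolding q_def by (rule powr_power) simp
    also have "real (2*k) * (-(1/2 - 1/k)) = - real (k - 2)"
      using \<open>2 \<le> k\<close> by (simp add: field_simps of_nat_diff)
    finally show ?thesis by (simp add: powr_realpow[symmetric] powr_add[symmetric])
  qed
  have "\<bar>dyadic_increment n j \<omega>\<bar> \<le> B * q^n"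
    if "- real N \<le> of_int j / 2^n" "(of_int j + 1) / 2^n \<le> real N" for n j
  proof -
    have "real_of_int (- (int N * 2^n)) \<le> of_int j" "real_of_int (j + 1) \<le> of_int (int N * 2^n)"
      using that by (simp_all add: field_simps)
    then have "- (int N * 2^n) \<le> j" "j + 1 \<le> int N * 2^n" by (simp_all only: of_int_le_iff)
    then have "j \<in> {- (int N * 2^n) ..< int N * 2^n}" by simp
    then have "2^((k-2)*n) * dyadic_increment n j \<omega> ^ (2*k) \<le> a n"
      unfolding a_def by (intro mult_left_mono member_le_sum) (auto simp: zero_le_even_power)
    moreover have "(\<bar>dyadic_increment n j \<omega>\<bar> / q^n) ^ (2*k) = 2^((k-2)*n) * dyadic_increment n j \<omega> ^ (2*k)"
    proof -
      have "(q^(2*k))^n * (2^(k-2))^n = 1" using q_pow by (simp flip: power_mult_distrib)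
      then show ?thesis
        using q_def by (simp add: power_divide power_even_abs field_simps flip: power_mult power_mult_distrib)
    qed
    ultimately have "(\<bar>dyadic_increment n j \<omega>\<bar> / q^n) ^ (2*k) \<le> suminf a"
      using a_le[of n] by linarith
    then have "root (2*k) ((\<bar>dyadic_increment n j \<omega>\<bar> / q^n) ^ (2*k)) \<le> B"
      unfolding B_def using \<open>2 \<le> k\<close> by (intro real_root_le_mono) auto
    then have "\<bar>dyadic_increment n j \<omega>\<bar> / q^n \<le> B"
      using \<open>2 \<le> k\<close> q_def by (simp add: real_root_power_cancel)
    then show ?thesis using q_def by (simp add: divide_le_eq)
  qed
  then show ?thesis using that[OF \<open>0 \<le> B\<close>] unfolding dyadic_increment_def q_def by blast
qed


lemma hoelder_on_of_energy_finite:
  assumes "dyadic_energy k N \<omega> \<noteq> \<infinity>" "3 \<le> k" "0 < \<alpha>" "\<alpha> \<le> 1/2 - 1/k"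
  shows "\<exists>C. \<forall>s t. - real N \<le> s \<longrightarrow> s \<le> real N \<longrightarrow> - real N \<le> t \<longrightarrow> t \<le> real N \<longrightarrow>
           \<bar>dyadic_limit (\<lambda>t. X t \<omega>) s - dyadic_limit (\<lambda>t. X t \<omega>) t\<bar> \<le> C * \<bar>s - t\<bar> powr \<alpha>"
proof -
  obtain B where B: "0 \<le> B"
    "\<And>n j. - real N \<le> of_int j / 2^n \<Longrightarrow> (of_int j + 1) / 2^n \<le> real N \<Longrightarrow>
       \<bar>X ((of_int j + 1) / 2^n) \<omega> - X (of_int j / 2^n) \<omega>\<bar> \<le> B * (2 powr (-(1/2 - 1/k)))^n"
    using dyadic_increment_le_of_energy_finite[OF assms(1)] assms(2) by auto
  have "0 < 1/2 - 1/real k" using assms(2) by (simp add: field_simps)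
  then have "2 powr (-(1/2 - 1/k)) < 1" by (intro powr_less_one) auto
  then interpret dyadic_increment_bound "\<lambda>t. X t \<omega>" "2 powr (-(1/2 - 1/k))" B N
    using B by unfold_locales auto
  show ?thesis using dyadic_limit_hoelder assms(3,4) by blast
qed

definition regular_paths :: "'w set" where
  "regular_paths = {\<omega> \<in> space M. \<forall>k N. dyadic_energy (k + 3) N \<omega> \<noteq> \<infinity>}"

definition modification :: "real \<Rightarrow> 'w \<Rightarrow> real" where
  "modification t \<omega> = (if \<omega> \<in> regular_paths then dyadic_limit (\<lambda>s. X s \<omega>) t else 0)"

lemma AE_regular_paths: "AE \<omega> in M. \<omega> \<in> regular_paths"
proof -
  have "AE \<omega> in M. \<forall>k N. dyadic_energy (k + 3) N \<omega> \<noteq> \<infinity>"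
  proof (subst AE_all_countable, intro allI, subst AE_all_countable, intro allI)
    fix k N
    show "AE \<omega> in M. dyadic_energy (k + 3) N \<omega> \<noteq> \<infinity>"
      using nn_integral_dyadic_energy_finite[of "k + 3" N] by (intro nn_integral_PInf_AE) auto
  qed
  then show ?thesis by (auto simp: regular_paths_def elim: eventually_mono)
qed

lemma measurable_modification: "modification t \<in> borel_measurable M"
proof -
  have "regular_paths \<in> sets M" unfolding regular_paths_def by measurable
  then show ?thesis
    unfolding modification_def dyadic_limit_def
    by (intro measurable_If_set borel_measurable_lim_metric) auto
qed

lemma AE_tendsto_dyadic_floor: "AE \<omega> in M. (\<lambda>n. X (dyadic_floor n t) \<omega>) \<longlonglongrightarrow> X t \<omega>"
proof -
  have close: "\<bar>dyadic_floor n t - t\<bar> \<le> (1/2)^n" for n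
    using dyadic_floor_le[of n t] dyadic_floor_gt[of t n] by (simp add: power_one_over)
  have "(\<integral>\<^sup>+\<omega>. ennreal ((X (dyadic_floor n t) \<omega> - X t \<omega>) ^ 2) \<partial>M) \<le> ennreal (K 1 * (1/2)^n)" for n
  proof -
    have "\<bar>dyadic_floor n t - t\<bar> \<le> 1" using close[of n] by (rule order.trans) (simp add: power_le_one)
    from moment_le[OF this, of 1]
    have "(\<integral>\<^sup>+\<omega>. ennreal ((X (dyadic_floor n t) \<omega> - X t \<omega>) ^ 2) \<partial>M) \<le> ennreal (K 1 * \<bar>dyadic_floor n t - t\<bar>)"
      by simp
    also have "\<dots> \<le> ennreal (K 1 * (1/2)^n)"
      using close[of n] K_nonneg[of 1] by (intro ennreal_leI mult_left_mono) auto
    finally show ?thesis .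
  qed
  then have "(\<Sum>n. \<integral>\<^sup>+\<omega>. ennreal ((X (dyadic_floor n t) \<omega> - X t \<omega>) ^ 2) \<partial>M) \<le> (\<Sum>n. ennreal (K 1 * (1/2)^n))"
    by (intro suminf_le) auto
  also have "\<dots> = ennreal (\<Sum>n. K 1 * (1/2)^n)"
    using K_nonneg by (intro suminf_ennreal2) (auto intro!: summable_mult summable_geometric)
  finally have "AE \<omega> in M. (\<lambda>n. X (dyadic_floor n t) \<omega> - X t \<omega>) \<longlonglongrightarrow> 0"
    by (intro AE_tendsto_zero_of_summable_second_moments) (auto simp: top_unique)
  then show ?thesis
    by (rule eventually_mono) (simp add: LIM_zero_iff)
qed

lemma AE_modification_eq: "AE \<omega> in M. modification t \<omega> = X t \<omega>"
  using AE_regular_paths AE_tendsto_dyadic_floor[of t]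
  by eventually_elim (auto simp: modification_def dyadic_limit_def limI)

lemma locally_hoelder_modification:
  assumes "0 < \<alpha>" "\<alpha> < 1/2"
  shows "locally_hoelder \<alpha> (\<lambda>t. modification t \<omega>)"
proof (cases "\<omega> \<in> regular_paths")
  case False
  then show ?thesis
    unfolding locally_hoelder_def by (intro allI exI[of _ 0] ballI) (simp add: modification_def)
next
  case True
  then have path: "(\<lambda>t. modification t \<omega>) = dyadic_limit (\<lambda>s. X s \<omega>)"
    by (simp add: modification_def fun_eq_iff)
  obtain k :: nat where k: "3 \<le> k" "\<alpha> \<le> 1/2 - 1/k"
    by (rule exists_nat_exponent_below_half[OF assms(2)])
  obtain i where "k = i + 3" using le_Suc_ex[OF k(1)] by (auto simp: add.commute)
  then have energy: "dyadic_energy k N \<omega> \<noteq> \<infinity>" for N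
    using True unfolding regular_paths_def by simp
  show ?thesis
    unfolding path by (rule locally_hoelderI, rule hoelder_on_of_energy_finite[OF energy k(1) assms(1) k(2)])
qed

theorem exists_locally_hoelder_modification:
  "\<exists>Y. (\<forall>t. Y t \<in> borel_measurable M \<and> (AE \<omega> in M. Y t \<omega> = X t \<omega>)) \<and>
       (\<forall>\<omega>\<in>space M. \<forall>\<alpha>. 0 < \<alpha> \<and> \<alpha> < 1/2 \<longrightarrow> locally_hoelder \<alpha> (\<lambda>t. Y t \<omega>))"
  by (intro exI[of _ modification] conjI allI ballI impI)
    (auto intro: measurable_modification AE_modification_eq locally_hoelder_modification)

end

section \<open>The ambit process\<close>

lemma moment_bound_rescale_le:
  fixes a b d h :: real
  assumes "0 \<le> b" "0 \<le> d" "0 \<le> h" "h \<le> 1"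
  shows "(a * h)^(2*k) + (b * h)^k * d \<le> (a^(2*k) + b^k * d) * h^k"
proof -
  have "(a * h)^(2*k) = a^(2*k) * (h^k)^2" by (simp add: power_mult_distrib power_mult mult.commute)
  also have "\<dots> \<le> a^(2*k) * h^k"
    using assms by (intro mult_left_mono) (auto simp: power2_eq_square mult_left_le power_le_one zero_le_even_power)
  finally show ?thesis by (simp add: power_mult_distrib algebra_simps)
qed

lemma levy_ambit_increment_moment_le:
  assumes levy: "gaussian_levy_basis M L \<mu> \<sigma>"
    and cont: "continuous_on {..0} \<phi>" and mono: "mono_on {..0} \<phi>"
    and nonneg: "\<forall>s\<le>0. 0 \<le> \<phi> s" and integrable: "set_integrable lborel {..0} \<phi>"
    and "\<bar>t - s\<bar> \<le> 1"
  shows "(\<integral>\<^sup>+\<omega>. ennreal ((L (ambit_set \<phi> t) \<omega> - L (ambit_set \<phi> s) \<omega>) ^ (2*k)) \<partial>M)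
    \<le> ennreal (2 * 16^k * ((\<mu> * \<phi> 0)^(2*k) + (\<sigma>\<^sup>2 * \<phi> 0)^k * std_normal_even_moment k) * \<bar>t - s\<bar>^k)"
proof -
  let ?h = "\<bar>t - s\<bar>"
  have "0 \<le> \<phi> 0" using nonneg by simp
  note Diff_le = measure_ambit_set_Diff_le[OF cont mono nonneg integrable]
  have "(\<integral>\<^sup>+\<omega>. ennreal ((L (ambit_set \<phi> t) \<omega> - L (ambit_set \<phi> s) \<omega>) ^ (2*k)) \<partial>M)
    \<le> ennreal (2 * 16^k * ((\<mu> * (\<phi> 0 * ?h))^(2*k) + (\<sigma>\<^sup>2 * (\<phi> 0 * ?h))^k * std_normal_even_moment k))"
    using Diff_le[of t s] Diff_le[of s t]
    by (intro levy_basis_increment_moment_le[OF levy] sets_ambit_set[OF cont]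
        emeasure_ambit_set_finite[OF cont nonneg integrable]) (auto simp: abs_minus_commute)
  also have "\<dots> \<le> ennreal (2 * 16^k * ((\<mu> * \<phi> 0)^(2*k) + (\<sigma>\<^sup>2 * \<phi> 0)^k * std_normal_even_moment k) * ?h^k)"
    using moment_bound_rescale_le[of "\<sigma>\<^sup>2 * \<phi> 0" "std_normal_even_moment k" ?h "\<mu> * \<phi> 0" k]
      \<open>0 \<le> \<phi> 0\<close> \<open>?h \<le> 1\<close> std_normal_even_moment_nonneg
    by (intro ennreal_leI) (simp add: mult_ac)
  finally show ?thesis .
qed

theorem mainTheorem5:
  fixes M :: "'w measure"
    and L :: "(real \<times> real) set \<Rightarrow> 'w \<Rightarrow> real"
    and \<mu> \<sigma> :: real
    and \<phi> :: "real \<Rightarrow> real"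
    and A :: "(real \<times> real) set"
    and X :: "real \<Rightarrow> 'w \<Rightarrow> real"
  assumes levy: "gaussian_levy_basis M L \<mu> \<sigma>"
    and cont: "continuous_on {..0} \<phi>"
    and incr: "mono_on {..0} \<phi>"
    and nonneg: "\<forall>s\<le>0. \<phi> s \<ge> 0"
    and integr: "set_integrable lborel {..0} \<phi>"
    and A_def: "A = {(s, x). s < 0 \<and> 0 < x \<and> x < \<phi> s}"
    and X_def: "\<forall>t. X t = L ((\<lambda>p. p + (t, 0)) ` A)"
  shows "\<exists>Y :: real \<Rightarrow> 'w \<Rightarrow> real.
           (\<forall>t. Y t \<in> borel_measurable M \<and> (AE \<omega> in M. Y t \<omega> = X t \<omega>)) \<and>
           (\<forall>\<omega>\<in>space M. \<forall>\<alpha>. 0 < \<alpha> \<and> \<alpha> < 1/2 \<longrightarrow> locally_hoelder \<alpha> (\<lambda>t. Y t \<omega>))"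
proof -
  have "A = ambit_set \<phi> 0" unfolding A_def ambit_set_def by simp
  then have X: "X t = L (ambit_set \<phi> t)" for t
    using X_def translate_ambit_set[of t \<phi> 0] by simp
  interpret kolmogorov_chentsov M X
    "\<lambda>k. 2 * 16^k * ((\<mu> * \<phi> 0)^(2*k) + (\<sigma>\<^sup>2 * \<phi> 0)^k * std_normal_even_moment k)"
  proof
    show "X t \<in> borel_measurable M" for t
      unfolding X using levy_basis_measurable[OF levy] sets_ambit_set[OF cont]
        emeasure_ambit_set_finite[OF cont nonneg integr] by blast
    show "0 \<le> 2 * 16^k * ((\<mu> * \<phi> 0)^(2*k) + (\<sigma>\<^sup>2 * \<phi> 0)^k * std_normal_even_moment k)" for k
      using nonneg std_normal_even_moment_nonneg by (auto simp: zero_le_even_power)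
  qed (unfold X, rule levy_ambit_increment_moment_le[OF levy cont incr nonneg integr])
  show ?thesis by (rule exists_locally_hoelder_modification)
qed

end
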